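(* Let $(V,g)$ be a 4-dimensional pseudo-Riemannian manifold whose metric in local coordinates $x=(x^1,x^2,x^3,x^4)$ on an open domain reads \[ ds^2=\Phi(x)\big[\Xi_1(dx^1)^2+\Xi_2(dx^2)^2+\Xi_3(dx^3)^2\big]+2\sum_{i=1}^3\beta_i(x)\,dx^idx^4+\Psi(x)(dx^4)^2, \] where $\Xi_i=\Xi_i(x^1,x^2,x^3)$, and $\Phi,\beta_i,\Psi,\Xi_i$ are $C^2$ functions with $\Phi,\Xi_1,\Xi_2,\Xi_3$ nowhere zero and the metric nondegenerate. Let $P^a{}_b$ be the orthogonal projector onto the tangent spaces of the hypersurfaces $x^4=\mathrm{const}$, whose nonzero components are $P^1{}_1=P^2{}_2=P^3{}_3=1$, $P^i{}_4=\beta_i/(\Phi\,\Xi_i)$ ($i=1,2,3$), and let $\Pi_{ab}=g_{ab}-P_{ab}$ (so $p=3$, $n=4$). Then \[ P^r{}_aP^s{}_bP^q{}_cT_{rsq}=0 . \]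
   Context: Indices are raised and lowered with $g$. For a pair of smooth symmetric tensor fields $P_{ab}$, $\Pi_{ab}$ forming at each point orthogonal complementary projectors ($P_{ab}+\Pi_{ab}=g_{ab}$, $P_{aq}P^q{}_b=P_{ab}$, $\Pi_{aq}\Pi^q{}_b=\Pi_{ab}$, $P_{aq}\Pi^q{}_b=0$) with $p=P^a{}_a$, and $\nabla$ the Levi-Civita connection of $g$, define $M_{abc}=\nabla_bP_{ac}+\nabla_cP_{ab}-\nabla_aP_{bc}$, $E_a=M_{acb}P^{cb}$, $W_a=-M_{acb}\Pi^{cb}$, and $T_{abc}=M_{abc}+\frac{1}{n-p}W_a\Pi_{bc}-\frac1pE_aP_{bc}$. *)

theory Defs
  imports "HOL-Analysis.Analysis"
begin

text \<open>The coordinates x^1, x^2, x^3 are the components 1, 2, 3 and the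
coordinate x^4 is the component 0 (note (4::4) = 0).\<close>

definition pd :: "4 \<Rightarrow> (real^4 \<Rightarrow> real) \<Rightarrow> real^4 \<Rightarrow> real" where
  "pd i f x = frechet_derivative f (at x) (axis i 1)"

definition C2_on :: "(real^4) set \<Rightarrow> (real^4 \<Rightarrow> real) \<Rightarrow> bool" where
  "C2_on U f \<longleftrightarrow> f differentiable_on U \<and> (\<forall>i. pd i f differentiable_on U)
      \<and> (\<forall>i j. continuous_on U (pd j (pd i f)))"

definition gmat :: "(real^4 \<Rightarrow> 4 \<Rightarrow> 4 \<Rightarrow> real) \<Rightarrow> real^4 \<Rightarrow> real^4^4" where
  "gmat g x = (\<chi> a b. g x a b)"

definition ginv :: "(real^4 \<Rightarrow> 4 \<Rightarrow> 4 \<Rightarrow> real) \<Rightarrow> real^4 \<Rightarrow> 4 \<Rightarrow> 4 \<Rightarrow> real" where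
  "ginv g x a b = matrix_inv (gmat g x) $ a $ b"

definition Christoffel :: "(real^4 \<Rightarrow> 4 \<Rightarrow> 4 \<Rightarrow> real) \<Rightarrow> real^4 \<Rightarrow> 4 \<Rightarrow> 4 \<Rightarrow> 4 \<Rightarrow> real" where
  "Christoffel g x d a b = (1/2) * (\<Sum>e\<in>UNIV. ginv g x d e *
      (pd a (\<lambda>y. g y e b) x + pd b (\<lambda>y. g y e a) x - pd e (\<lambda>y. g y a b) x))"

definition Plow :: "(real^4 \<Rightarrow> 4 \<Rightarrow> 4 \<Rightarrow> real) \<Rightarrow> (real^4 \<Rightarrow> 4 \<Rightarrow> 4 \<Rightarrow> real) \<Rightarrow> real^4 \<Rightarrow> 4 \<Rightarrow> 4 \<Rightarrow> real" where
  "Plow g Pm x a b = (\<Sum>c\<in>UNIV. g x a c * Pm x c b)"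

definition Pup :: "(real^4 \<Rightarrow> 4 \<Rightarrow> 4 \<Rightarrow> real) \<Rightarrow> (real^4 \<Rightarrow> 4 \<Rightarrow> 4 \<Rightarrow> real) \<Rightarrow> real^4 \<Rightarrow> 4 \<Rightarrow> 4 \<Rightarrow> real" where
  "Pup g Pm x a b = (\<Sum>c\<in>UNIV. Pm x a c * ginv g x c b)"

definition Pilow :: "(real^4 \<Rightarrow> 4 \<Rightarrow> 4 \<Rightarrow> real) \<Rightarrow> (real^4 \<Rightarrow> 4 \<Rightarrow> 4 \<Rightarrow> real) \<Rightarrow> real^4 \<Rightarrow> 4 \<Rightarrow> 4 \<Rightarrow> real" where
  "Pilow g Pm x a b = g x a b - Plow g Pm x a b"

definition Piup :: "(real^4 \<Rightarrow> 4 \<Rightarrow> 4 \<Rightarrow> real) \<Rightarrow> (real^4 \<Rightarrow> 4 \<Rightarrow> 4 \<Rightarrow> real) \<Rightarrow> real^4 \<Rightarrow> 4 \<Rightarrow> 4 \<Rightarrow> real" where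
  "Piup g Pm x a b = ginv g x a b - Pup g Pm x a b"

text \<open>nablaP g Pm x b a c = nabla_b P_ac.\<close>
definition nablaP :: "(real^4 \<Rightarrow> 4 \<Rightarrow> 4 \<Rightarrow> real) \<Rightarrow> (real^4 \<Rightarrow> 4 \<Rightarrow> 4 \<Rightarrow> real) \<Rightarrow> real^4 \<Rightarrow> 4 \<Rightarrow> 4 \<Rightarrow> 4 \<Rightarrow> real" where
  "nablaP g Pm x b a c = pd b (\<lambda>y. Plow g Pm y a c) x
     - (\<Sum>d\<in>UNIV. Christoffel g x d b a * Plow g Pm x d c)
     - (\<Sum>d\<in>UNIV. Christoffel g x d b c * Plow g Pm x a d)"

definition Mt :: "(real^4 \<Rightarrow> 4 \<Rightarrow> 4 \<Rightarrow> real) \<Rightarrow> (real^4 \<Rightarrow> 4 \<Rightarrow> 4 \<Rightarrow> real) \<Rightarrow> real^4 \<Rightarrow> 4 \<Rightarrow> 4 \<Rightarrow> 4 \<Rightarrow> real" where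
  "Mt g Pm x a b c = nablaP g Pm x b a c + nablaP g Pm x c a b - nablaP g Pm x a b c"

definition Ev :: "(real^4 \<Rightarrow> 4 \<Rightarrow> 4 \<Rightarrow> real) \<Rightarrow> (real^4 \<Rightarrow> 4 \<Rightarrow> 4 \<Rightarrow> real) \<Rightarrow> real^4 \<Rightarrow> 4 \<Rightarrow> real" where
  "Ev g Pm x a = (\<Sum>c\<in>UNIV. \<Sum>b\<in>UNIV. Mt g Pm x a c b * Pup g Pm x c b)"

definition Wv :: "(real^4 \<Rightarrow> 4 \<Rightarrow> 4 \<Rightarrow> real) \<Rightarrow> (real^4 \<Rightarrow> 4 \<Rightarrow> 4 \<Rightarrow> real) \<Rightarrow> real^4 \<Rightarrow> 4 \<Rightarrow> real" where
  "Wv g Pm x a = - (\<Sum>c\<in>UNIV. \<Sum>b\<in>UNIV. Mt g Pm x a c b * Piup g Pm x c b)"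

definition ptrace :: "(real^4 \<Rightarrow> 4 \<Rightarrow> 4 \<Rightarrow> real) \<Rightarrow> real^4 \<Rightarrow> real" where
  "ptrace Pm x = (\<Sum>a\<in>UNIV. Pm x a a)"

definition Tt :: "(real^4 \<Rightarrow> 4 \<Rightarrow> 4 \<Rightarrow> real) \<Rightarrow> (real^4 \<Rightarrow> 4 \<Rightarrow> 4 \<Rightarrow> real) \<Rightarrow> real^4 \<Rightarrow> 4 \<Rightarrow> 4 \<Rightarrow> 4 \<Rightarrow> real" where
  "Tt g Pm x a b c = Mt g Pm x a b c
     + (1 / (real CARD(4) - ptrace Pm x)) * Wv g Pm x a * Pilow g Pm x b c
     - (1 / ptrace Pm x) * Ev g Pm x a * Plow g Pm x b c"

definition metric_coord :: "(real^4 \<Rightarrow> real) \<Rightarrow> (4 \<Rightarrow> real^4 \<Rightarrow> real) \<Rightarrow> (4 \<Rightarrow> real^4 \<Rightarrow> real)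
     \<Rightarrow> (real^4 \<Rightarrow> real) \<Rightarrow> real^4 \<Rightarrow> 4 \<Rightarrow> 4 \<Rightarrow> real" where
  "metric_coord Phi Xi beta Psi x a b =
     (if a = 0 \<and> b = 0 then Psi x
      else if a = 0 then beta b x
      else if b = 0 then beta a x
      else if a = b then Phi x * Xi a x
      else 0)"

definition Pmix_coord :: "(real^4 \<Rightarrow> real) \<Rightarrow> (4 \<Rightarrow> real^4 \<Rightarrow> real) \<Rightarrow> (4 \<Rightarrow> real^4 \<Rightarrow> real)
     \<Rightarrow> real^4 \<Rightarrow> 4 \<Rightarrow> 4 \<Rightarrow> real" where
  "Pmix_coord Phi Xi beta x a b =
     (if a = 0 then 0
      else if b = a then 1
      else if b = 0 then beta a x / (Phi x * Xi a x)
      else 0)"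

end

theory Submission
  imports Defs
begin

text \<open>The projector is the identity on the coordinate directions x^1, x^2, x^3, and lowering
its index gives P_ab = g_ab as soon as one index is spatial. Hence on spatial indices the
covariant derivative of P is the covariant derivative of g, which vanishes: M_ijk = 0, and
with it E_i = 0 (P^cb lives on spatial indices) and Pi_jk = 0. Since P^0_a = 0, the projection
P^r_a P^s_b P^q_c only sees these spatial components of T.\<close>

lemma matrix_mul_matrix_inv:
  fixes A :: "real^'n^'n"
  assumes "invertible A"
  shows "A ** matrix_inv A = mat 1"
proof -
  have "\<exists>A'. A ** A' = mat 1 \<and> A' ** A = mat 1"
    using assms unfolding invertible_def by blast
  from someI_ex[OF this] show ?thesis unfolding matrix_inv_def by blast
qed

lemma metric_mul_ginv:
  assumes "invertible (gmat g x)"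
  shows "(\<Sum>d\<in>UNIV. g x k d * ginv g x d e) = (if k = e then 1 else 0)"
proof -
  have "(gmat g x ** matrix_inv (gmat g x)) $ k $ e = (if k = e then 1 else 0)"
    using matrix_mul_matrix_inv[OF assms] by (simp add: mat_def)
  then show ?thesis by (simp add: matrix_matrix_mult_def gmat_def ginv_def)
qed

lemma Christoffel_lowered:
  assumes inv: "invertible (gmat g x)" and sym: "\<And>a b. g x a b = g x b a"
  shows "(\<Sum>d\<in>UNIV. Christoffel g x d a b * g x d k) =
    (1/2) * (pd a (\<lambda>y. g y k b) x + pd b (\<lambda>y. g y k a) x - pd k (\<lambda>y. g y a b) x)"
proof -
  define X where "X e = pd a (\<lambda>y. g y e b) x + pd b (\<lambda>y. g y e a) x - pd e (\<lambda>y. g y a b) x"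
    for e
  have "(\<Sum>d\<in>UNIV. Christoffel g x d a b * g x d k)
      = (\<Sum>d\<in>UNIV. \<Sum>e\<in>UNIV. (1/2) * X e * (g x k d * ginv g x d e))"
    unfolding Christoffel_def X_def[symmetric]
    by (simp add: sum_distrib_left sum_distrib_right sym[of _ k] mult_ac)
  also have "\<dots> = (\<Sum>e\<in>UNIV. (1/2) * X e * (\<Sum>d\<in>UNIV. g x k d * ginv g x d e))"
    by (subst sum.swap) (simp add: sum_distrib_left)
  also have "\<dots> = (\<Sum>e\<in>UNIV. if k = e then (1/2) * X e else 0)"
    by (intro sum.cong) (simp_all add: metric_mul_ginv[OF inv])
  also have "\<dots> = (1/2) * X k" by simp
  finally show ?thesis by (simp add: X_def)
qed

text \<open>Where the lowered projector agrees with g, its covariant derivative is that of g, which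
vanishes: the Christoffel terms cancel the coordinate derivative.\<close>

lemma nablaP_eq_0_if_Plow_eq_metric:
  assumes inv: "invertible (gmat g x)"
    and sym: "\<And>y a b. g y a b = g y b a"
    and Plow_k: "\<And>y a. Plow g Pm y a k = g y a k"
    and Plow_i: "\<And>d. Plow g Pm x i d = g x i d"
  shows "nablaP g Pm x j i k = 0"
proof -
  have sym_fun: "(\<lambda>y. g y a b) = (\<lambda>y. g y b a)" for a b
    using sym by auto
  have Plow_fun: "(\<lambda>y. Plow g Pm y i k) = (\<lambda>y. g y i k)"
    using Plow_k by auto
  have first_sum: "(\<Sum>d\<in>UNIV. Christoffel g x d j i * Plow g Pm x d k)
      = (1/2) * (pd j (\<lambda>y. g y k i) x + pd i (\<lambda>y. g y k j) x - pd k (\<lambda>y. g y j i) x)"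
    using Christoffel_lowered[OF inv sym] Plow_k by simp
  have "(\<Sum>d\<in>UNIV. Christoffel g x d j k * Plow g Pm x i d)
      = (\<Sum>d\<in>UNIV. Christoffel g x d j k * g x d i)"
    using Plow_i sym by simp
  also have "\<dots> = (1/2) * (pd j (\<lambda>y. g y i k) x + pd k (\<lambda>y. g y i j) x - pd i (\<lambda>y. g y j k) x)"
    by (rule Christoffel_lowered[OF inv sym])
  finally have second_sum: "(\<Sum>d\<in>UNIV. Christoffel g x d j k * Plow g Pm x i d) = \<dots>" .
  show ?thesis
    unfolding nablaP_def Plow_fun first_sum second_sum
    using sym_fun[of k i] sym_fun[of k j] sym_fun[of j i] sym_fun[of j k]
    by (simp add: field_simps)
qed

lemma projected_Tt_eq_0:
  assumes inv: "invertible (gmat g x)"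
    and sym: "\<And>y a b. g y a b = g y b a"
    and Plow_right: "\<And>k y a. k \<in> S \<Longrightarrow> Plow g Pm y a k = g y a k"
    and Plow_left: "\<And>i d. i \<in> S \<Longrightarrow> Plow g Pm x i d = g x i d"
    and Pup_outside: "\<And>c b. c \<notin> S \<or> b \<notin> S \<Longrightarrow> Pup g Pm x c b = 0"
    and Pm_outside: "\<And>r a. r \<notin> S \<Longrightarrow> Pm x r a = 0"
  shows "(\<Sum>r\<in>UNIV. \<Sum>s\<in>UNIV. \<Sum>q\<in>UNIV.
      Pm x r a * Pm x s b * Pm x q c * Tt g Pm x r s q) = 0"
proof -
  have Mt_S: "Mt g Pm x i j k = 0" if "i \<in> S" "j \<in> S" "k \<in> S" for i j k
    using that nablaP_eq_0_if_Plow_eq_metric[OF inv sym Plow_right Plow_left]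
    by (simp add: Mt_def)
  have Ev_S: "Ev g Pm x i = 0" if "i \<in> S" for i
  proof -
    have summand_0: "Mt g Pm x i c b * Pup g Pm x c b = 0" for c b
      using that Mt_S Pup_outside by (cases "c \<in> S \<and> b \<in> S") auto
    show ?thesis unfolding Ev_def summand_0 by simp
  qed
  have Tt_S: "Tt g Pm x i j k = 0" if "i \<in> S" "j \<in> S" "k \<in> S" for i j k
    using that Mt_S Ev_S Plow_left by (simp add: Tt_def Pilow_def)
  have summand_0: "Pm x r a * Pm x s b * Pm x q c * Tt g Pm x r s q = 0" for r s q
    using Tt_S Pm_outside by (cases "r \<in> S \<and> s \<in> S \<and> q \<in> S") auto
  show ?thesis unfolding summand_0 by simp
qed

lemma metric_coord_sym:
  "metric_coord Phi Xi beta Psi y a b = metric_coord Phi Xi beta Psi y b a"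
  by (auto simp: metric_coord_def)

lemma Pmix_coord_spatial_column:
  "k \<noteq> 0 \<Longrightarrow> Pmix_coord Phi Xi beta y c k = (if c = k then 1 else 0)"
  by (auto simp: Pmix_coord_def)

lemma Plow_coord_spatial_right:
  assumes "k \<noteq> 0"
  shows "Plow (metric_coord Phi Xi beta Psi) (Pmix_coord Phi Xi beta) y a k
    = metric_coord Phi Xi beta Psi y a k"
  using assms by (simp add: Plow_def Pmix_coord_spatial_column if_distrib cong: if_cong)

lemma Plow_coord_spatial_left:
  assumes "i \<noteq> 0" and "Phi x * Xi i x \<noteq> 0"
  shows "Plow (metric_coord Phi Xi beta Psi) (Pmix_coord Phi Xi beta) x i d
    = metric_coord Phi Xi beta Psi x i d"
proof (cases "d = 0")
  case False
  then show ?thesis by (rule Plow_coord_spatial_right)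
next
  case True
  have "metric_coord Phi Xi beta Psi x i c * Pmix_coord Phi Xi beta x c 0
      = (if c = i then beta i x else 0)" for c
    using assms by (auto simp: metric_coord_def Pmix_coord_def)
  then show ?thesis
    using True assms(1) by (simp add: Plow_def metric_coord_def)
qed

text \<open>For spatial c the row P^c_d equals g_cd / (Phi Xi_c), so P^c0 = g_cd g^d0 / (Phi Xi_c) = 0.\<close>

lemma Pup_coord_eq_0:
  assumes inv: "invertible (gmat (metric_coord Phi Xi beta Psi) x)"
    and nonzero: "\<And>i. i \<noteq> 0 \<Longrightarrow> Phi x * Xi i x \<noteq> 0"
    and "c = 0 \<or> b = 0"
  shows "Pup (metric_coord Phi Xi beta Psi) (Pmix_coord Phi Xi beta) x c b = 0"
proof (cases "c = 0")
  case True
  then show ?thesis by (simp add: Pup_def Pmix_coord_def)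
next
  case False
  let ?g = "metric_coord Phi Xi beta Psi"
  have "Pmix_coord Phi Xi beta x c d * ginv ?g x d 0
      = (1 / (Phi x * Xi c x)) * (?g x c d * ginv ?g x d 0)" for d
    using False nonzero[OF False] by (auto simp: Pmix_coord_def metric_coord_def)
  then have "Pup ?g (Pmix_coord Phi Xi beta) x c 0
      = (1 / (Phi x * Xi c x)) * (\<Sum>d\<in>UNIV. ?g x c d * ginv ?g x d 0)"
    by (simp add: Pup_def sum_distrib_left)
  also have "\<dots> = 0"
    using False by (simp add: metric_mul_ginv[OF inv])
  finally show ?thesis
    using False assms(3) by simp
qed

theorem mainTheorem13:
  fixes U :: "(real^4) set"
    and Phi Psi :: "real^4 \<Rightarrow> real"
    and Xi beta :: "4 \<Rightarrow> real^4 \<Rightarrow> real"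
  assumes "open U"
    and "C2_on U Phi" and "C2_on U Psi"
    and "\<And>i. i \<noteq> 0 \<Longrightarrow> C2_on U (Xi i)"
    and "\<And>i. i \<noteq> 0 \<Longrightarrow> C2_on U (beta i)"
    and "\<And>i x y. i \<noteq> 0 \<Longrightarrow> x \<in> U \<Longrightarrow> y \<in> U \<Longrightarrow> (\<forall>k. k \<noteq> 0 \<longrightarrow> x $ k = y $ k) \<Longrightarrow> Xi i x = Xi i y"
    and "\<And>x. x \<in> U \<Longrightarrow> Phi x \<noteq> 0"
    and "\<And>i x. i \<noteq> 0 \<Longrightarrow> x \<in> U \<Longrightarrow> Xi i x \<noteq> 0"
    and "\<And>x. x \<in> U \<Longrightarrow> invertible (gmat (metric_coord Phi Xi beta Psi) x)"
  shows "\<forall>x\<in>U. \<forall>a b c.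
     (\<Sum>r\<in>UNIV. \<Sum>s\<in>UNIV. \<Sum>q\<in>UNIV.
        Pmix_coord Phi Xi beta x r a * Pmix_coord Phi Xi beta x s b * Pmix_coord Phi Xi beta x q c
        * Tt (metric_coord Phi Xi beta Psi) (Pmix_coord Phi Xi beta) x r s q) = 0"
proof (intro ballI allI)
  fix x a b c
  assume "x \<in> U"
  let ?g = "metric_coord Phi Xi beta Psi" and ?P = "Pmix_coord Phi Xi beta"
  have inv: "invertible (gmat ?g x)" and nonzero: "\<And>i. i \<noteq> 0 \<Longrightarrow> Phi x * Xi i x \<noteq> 0"
    using \<open>x \<in> U\<close> assms(7-9) by auto
  show "(\<Sum>r\<in>UNIV. \<Sum>s\<in>UNIV. \<Sum>q\<in>UNIV. ?P x r a * ?P x s b * ?P x q c * Tt ?g ?P x r s q) = 0"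
  proof (rule projected_Tt_eq_0[where S = "{k. k \<noteq> 0}"])
    show "invertible (gmat ?g x)" by (fact inv)
    show "?g y a b = ?g y b a" for y a b by (rule metric_coord_sym)
    show "Plow ?g ?P y a k = ?g y a k" if "k \<in> {k. k \<noteq> 0}" for k y a
      using that by (simp add: Plow_coord_spatial_right)
    show "Plow ?g ?P x i d = ?g x i d" if "i \<in> {k. k \<noteq> 0}" for i d
      using that nonzero by (simp add: Plow_coord_spatial_left)
    show "Pup ?g ?P x c b = 0" if "c \<notin> {k. k \<noteq> 0} \<or> b \<notin> {k. k \<noteq> 0}" for c b
      using that Pup_coord_eq_0[OF inv nonzero] by simp
    show "?P x r a = 0" if "r \<notin> {k. k \<noteq> 0}" for r a
      using that by (simp add: Pmix_coord_def)
  qed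
qed

end
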